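(* Let $B=\mathcal L'\cup\mathcal J'$ with $\mathcal L'\subseteq\mathcal L$, $\mathcal J'\subseteq\mathcal J$ be a nondegenerate feasible basis of $\mathrm{LP}(\theta,0)$. If $$0\le\varepsilon<\min_{j\in\mathcal J}\frac{\sum_{\ell\in\mathsf S(\mathcal T(j))}\mu_\ell-\sum_{k\in\mathsf C(\mathcal T(j))}\lambda_k}{|\mathsf S(\mathcal T(j))|},$$ then $B$ is also a nondegenerate feasible basis of $\mathrm{LP}(\theta,\varepsilon)$.
   Context: $\mathcal I=\{1,\dots,I\}$, $\mathcal J=\{1,\dots,J\}$ disjoint, $\mathcal L\subseteq\mathcal I\times\mathcal J$, $\mathcal S_i=\{j:(ij)\in\mathcal L\}$, $\mathcal C_j=\{i:(ij)\in\mathcal L\}$, $\lambda\in\mathbb R^I_{>0}$, $\mu\in\mathbb R^J_{>0}$, $\theta\in\mathbb R^{\mathcal L}_{\ge0}$. $\mathrm{LP}(\theta,\varepsilon)$ in standard form: maximize $\sum\theta_{ij}x_{ij}$ s.t. $\sum_{j\in\mathcal S_i}x_{ij}=\lambda_i$, $\sum_{i\in\mathcal C_j}x_{ij}+\sigma_j=\mu_j-\varepsilon$, $x,\sigma\ge0$, variables indexed by $\mathcal L\cup\mathcal J$. A basis is $B\subseteq\mathcal L\cup\mathcal J$, $|B|=I+J$, with invertible column submatrix; its basic solution has non-basic variables $0$; it is feasible if the basic solution is nonnegative and nondegenerate if every basic variable is nonzero. For a basis $B=\mathcal L'\cup\mathcal J'$, the subgraph of $(\mathcal I\cup\mathcal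 J,\mathcal L)$ with edges $\mathcal L'$ is a spanning forest in which each tree contains exactly one node of $\mathcal J'$, taken as its root; $\mathcal T(v)$ is the subtree rooted at $v$ (including $v$), $\mathsf C(\mathcal T(v))=\mathcal T(v)\cap\mathcal I$, $\mathsf S(\mathcal T(v))=\mathcal T(v)\cap\mathcal J$. *)

theory Defs
  imports Complex_Main
begin

text \<open>Customers are 1..nI, servers are 1..nJ. LP variables are indexed by
  (nat \<times> nat) + nat : Inl (i,j) is x_ij for a link (i,j), Inr j is the slack sigma_j.
  Constraint rows are indexed by nat + nat : Inl i is the customer-i row,
  Inr j is the server-j row. Graph nodes are nat + nat : Inl i customer, Inr j server.\<close>

type_synonym var = "(nat \<times> nat) + nat"
type_synonym row = "nat + nat"

definition lp_vars :: "nat \<Rightarrow> (nat \<times> nat) set \<Rightarrow> var set" where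
  "lp_vars nJ L = Inl ` L \<union> Inr ` {1..nJ}"

definition lp_rows :: "nat \<Rightarrow> nat \<Rightarrow> row set" where
  "lp_rows nI nJ = Inl ` {1..nI} \<union> Inr ` {1..nJ}"

fun lp_mat :: "row \<Rightarrow> var \<Rightarrow> real" where
  "lp_mat (Inl i) (Inl (i', j)) = (if i = i' then 1 else 0)"
| "lp_mat (Inr j) (Inl (i, j')) = (if j = j' then 1 else 0)"
| "lp_mat (Inl i) (Inr j) = 0"
| "lp_mat (Inr j) (Inr j') = (if j = j' then 1 else 0)"

fun lp_rhs :: "(nat \<Rightarrow> real) \<Rightarrow> (nat \<Rightarrow> real) \<Rightarrow> real \<Rightarrow> row \<Rightarrow> real" where
  "lp_rhs lam mu eps (Inl i) = lam i"
| "lp_rhs lam mu eps (Inr j) = mu j - eps"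

definition is_basis :: "nat \<Rightarrow> nat \<Rightarrow> (nat \<times> nat) set \<Rightarrow> var set \<Rightarrow> bool" where
  "is_basis nI nJ L B \<longleftrightarrow>
     B \<subseteq> lp_vars nJ L \<and> card B = nI + nJ \<and>
     (\<exists>N :: var \<Rightarrow> row \<Rightarrow> real.
        (\<forall>r\<in>lp_rows nI nJ. \<forall>r'\<in>lp_rows nI nJ.
            (\<Sum>c\<in>B. lp_mat r c * N c r') = (if r = r' then 1 else 0)) \<and>
        (\<forall>c\<in>B. \<forall>c'\<in>B.
            (\<Sum>r\<in>lp_rows nI nJ. N c r * lp_mat r c') = (if c = c' then 1 else 0)))"

definition is_basic_solution ::
  "nat \<Rightarrow> nat \<Rightarrow> (nat \<times> nat) set \<Rightarrow> (nat \<Rightarrow> real) \<Rightarrow> (nat \<Rightarrow> real) \<Rightarrow> real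
     \<Rightarrow> var set \<Rightarrow> (var \<Rightarrow> real) \<Rightarrow> bool" where
  "is_basic_solution nI nJ L lam mu eps B v \<longleftrightarrow>
     (\<forall>x. x \<notin> B \<longrightarrow> v x = 0) \<and>
     (\<forall>r\<in>lp_rows nI nJ. (\<Sum>c\<in>lp_vars nJ L. lp_mat r c * v c) = lp_rhs lam mu eps r)"

definition basic_solution ::
  "nat \<Rightarrow> nat \<Rightarrow> (nat \<times> nat) set \<Rightarrow> (nat \<Rightarrow> real) \<Rightarrow> (nat \<Rightarrow> real) \<Rightarrow> real
     \<Rightarrow> var set \<Rightarrow> var \<Rightarrow> real" where
  "basic_solution nI nJ L lam mu eps B = (THE v. is_basic_solution nI nJ L lam mu eps B v)"

text \<open>B is a nondegenerate feasible basis of LP(theta, eps). (The objective theta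
  does not affect these notions; it is kept as a parameter to mirror LP(theta, eps).)\<close>
definition nondeg_feasible_basis ::
  "nat \<Rightarrow> nat \<Rightarrow> (nat \<times> nat) set \<Rightarrow> (nat \<Rightarrow> real) \<Rightarrow> (nat \<Rightarrow> real)
     \<Rightarrow> (nat \<times> nat \<Rightarrow> real) \<Rightarrow> real \<Rightarrow> var set \<Rightarrow> bool" where
  "nondeg_feasible_basis nI nJ L lam mu theta eps B \<longleftrightarrow>
     is_basis nI nJ L B \<and>
     (\<forall>x\<in>B. basic_solution nI nJ L lam mu eps B x \<ge> 0) \<and>
     (\<forall>x\<in>B. basic_solution nI nJ L lam mu eps B x \<noteq> 0)"

definition forest_edges :: "var set \<Rightarrow> (row \<times> row) set" where
  "forest_edges B = {(Inl i, Inr j) | i j. Inl (i, j) \<in> B} \<union> {(Inr j, Inl i) | i j. Inl (i, j) \<in> B}"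

definition forest_roots :: "var set \<Rightarrow> row set" where
  "forest_roots B = {Inr j | j. Inr j \<in> B}"

definition subtree :: "var set \<Rightarrow> row \<Rightarrow> row set" where
  "subtree B v = {v} \<union>
     {w. w \<noteq> v \<and> (w, v) \<in> (forest_edges B)\<^sup>* \<and>
         \<not> (\<exists>r\<in>forest_roots B. r \<noteq> v \<and>
              (w, r) \<in> {(a, b) \<in> forest_edges B. a \<noteq> v \<and> b \<noteq> v}\<^sup>*)}"

definition C_of :: "row set \<Rightarrow> nat set" where
  "C_of T = {i. Inl i \<in> T}"

definition S_of :: "row set \<Rightarrow> nat set" where
  "S_of T = {j. Inr j \<in> T}"

end

theory Submission
  imports Defs
begin

text \<open>Summing the equality constraints over a set of nodes T, with sign +1 on server rows and
  -1 on customer rows, gives a linear functional in which a basic link variable cancels whenever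
  both or neither of its end nodes lie in T. For a subtree T of the basis forest only the link
  above T (or, for a whole tree, the slack of its root) survives, so that basic variable equals,
  up to sign, \<mu>(S(T)) - \<epsilon>|S(T)| - \<lambda>(C(T)). If T hangs below a customer, or is a whole tree,
  this is positive by the choice of \<epsilon>; if T hangs below a server, the variable equals its value
  at \<epsilon> = 0 plus \<epsilon>|S(T)|. The forest structure itself (distinct roots lie in distinct
  components, every node reaches a root, every link is a bridge) follows from the invertibility
  of the basis matrix.\<close>

section \<open>The constraint matrix and basic solutions\<close>

lemma lp_mat_Inl:
  "lp_mat r (Inl (i, j)) = (if r = Inl i then 1 else 0) + (if r = Inr j then 1 else 0)"
  by (cases r) auto

lemma lp_mat_Inr: "lp_mat r (Inr j) = (if r = Inr j then 1 else 0)"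
  by (cases r) auto

lemma finite_lp_rows: "finite (lp_rows nI nJ)"
  by (simp add: lp_rows_def)

lemma finite_lp_vars: "L \<subseteq> {1..nI} \<times> {1..nJ} \<Longrightarrow> finite (lp_vars nJ L)"
  unfolding lp_vars_def using finite_subset by blast

lemma is_basis_subset_lp_vars: "is_basis nI nJ L B \<Longrightarrow> B \<subseteq> lp_vars nJ L"
  by (simp add: is_basis_def)

lemma is_basis_finite: "is_basis nI nJ L B \<Longrightarrow> L \<subseteq> {1..nI} \<times> {1..nJ} \<Longrightarrow> finite B"
  by (rule finite_subset[OF is_basis_subset_lp_vars finite_lp_vars])

lemma C_of_subset: "T \<subseteq> lp_rows nI nJ \<Longrightarrow> C_of T \<subseteq> {1..nI}"
  by (auto simp: C_of_def lp_rows_def)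

lemma S_of_subset: "T \<subseteq> lp_rows nI nJ \<Longrightarrow> S_of T \<subseteq> {1..nJ}"
  by (auto simp: S_of_def lp_rows_def)

definition lp_row_comb :: "(row \<Rightarrow> real) \<Rightarrow> var \<Rightarrow> real" where
  "lp_row_comb y c = (case c of Inl (i, j) \<Rightarrow> y (Inl i) + y (Inr j) | Inr j \<Rightarrow> y (Inr j))"

lemma sum_rows_lp_mat:
  assumes c: "c \<in> lp_vars nJ L" and L: "L \<subseteq> {1..nI} \<times> {1..nJ}"
  shows "(\<Sum>r\<in>lp_rows nI nJ. y r * lp_mat r c) = lp_row_comb y c"
proof (cases c)
  case (Inl p)
  then obtain i j where p: "c = Inl (i, j)" by (cases p) auto
  with c L have ij: "Inl i \<in> lp_rows nI nJ" "Inr j \<in> lp_rows nI nJ"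
    by (auto simp: lp_vars_def lp_rows_def)
  have "(\<Sum>r\<in>lp_rows nI nJ. y r * lp_mat r c) =
      (\<Sum>r\<in>lp_rows nI nJ. if r = Inl i then y r else 0) +
      (\<Sum>r\<in>lp_rows nI nJ. if r = Inr j then y r else 0)"
    unfolding p lp_mat_Inl sum.distrib[symmetric] by (rule sum.cong) auto
  also have "\<dots> = lp_row_comb y c"
    using ij by (simp add: sum.delta[OF finite_lp_rows] p lp_row_comb_def)
  finally show ?thesis .
next
  case (Inr j)
  with c have j: "Inr j \<in> lp_rows nI nJ" by (auto simp: lp_vars_def lp_rows_def)
  have "(\<Sum>r\<in>lp_rows nI nJ. y r * lp_mat r c) = (\<Sum>r\<in>lp_rows nI nJ. if r = Inr j then y r else 0)"
    unfolding Inr lp_mat_Inr by (rule sum.cong) auto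
  also have "\<dots> = lp_row_comb y c"
    using j by (simp add: sum.delta[OF finite_lp_rows] Inr lp_row_comb_def)
  finally show ?thesis .
qed

lemma is_basis_columns_independent:
  assumes bas: "is_basis nI nJ L B" and L: "L \<subseteq> {1..nI} \<times> {1..nJ}"
    and z: "\<forall>r\<in>lp_rows nI nJ. (\<Sum>c\<in>B. lp_mat r c * z c) = 0"
    and c': "c' \<in> B"
  shows "z c' = 0"
proof -
  from bas obtain N where N: "\<forall>c\<in>B. \<forall>c'\<in>B.
      (\<Sum>r\<in>lp_rows nI nJ. N c r * lp_mat r c') = (if c = c' then 1 else 0)"
    unfolding is_basis_def by blast
  have "z c' = (\<Sum>c\<in>B. if c' = c then z c else 0)"
    using c' is_basis_finite[OF bas L] by (simp add: sum.delta)
  also have "\<dots> = (\<Sum>c\<in>B. (\<Sum>r\<in>lp_rows nI nJ. N c' r * lp_mat r c) * z c)"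
    using N c' by (intro sum.cong) auto
  also have "\<dots> = (\<Sum>r\<in>lp_rows nI nJ. N c' r * (\<Sum>c\<in>B. lp_mat r c * z c))"
    by (simp add: sum_distrib_left sum_distrib_right sum.swap[of _ B] mult.assoc)
  also have "\<dots> = 0" using z by simp
  finally show ?thesis .
qed

lemma is_basis_rows_independent:
  assumes bas: "is_basis nI nJ L B"
    and y: "\<forall>c\<in>B. (\<Sum>r\<in>lp_rows nI nJ. y r * lp_mat r c) = 0"
    and r': "r' \<in> lp_rows nI nJ"
  shows "y r' = 0"
proof -
  from bas obtain N where N: "\<forall>r\<in>lp_rows nI nJ. \<forall>r'\<in>lp_rows nI nJ.
      (\<Sum>c\<in>B. lp_mat r c * N c r') = (if r = r' then 1 else 0)"
    unfolding is_basis_def by blast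
  have "y r' = (\<Sum>r\<in>lp_rows nI nJ. if r = r' then y r else 0)"
    using r' by (simp add: sum.delta' finite_lp_rows)
  also have "\<dots> = (\<Sum>r\<in>lp_rows nI nJ. y r * (\<Sum>c\<in>B. lp_mat r c * N c r'))"
    using N r' by (intro sum.cong) auto
  also have "\<dots> = (\<Sum>c\<in>B. (\<Sum>r\<in>lp_rows nI nJ. y r * lp_mat r c) * N c r')"
    by (simp add: sum_distrib_left sum_distrib_right sum.swap[of _ B] mult.assoc)
  also have "\<dots> = 0" using y by simp
  finally show ?thesis .
qed

lemma sum_lp_vars_supported:
  fixes v :: "var \<Rightarrow> real"
  assumes "B \<subseteq> lp_vars nJ L" "L \<subseteq> {1..nI} \<times> {1..nJ}" "\<forall>x. x \<notin> B \<longrightarrow> v x = 0"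
  shows "(\<Sum>c\<in>lp_vars nJ L. f c * v c) = (\<Sum>c\<in>B. f c * v c)"
  by (rule sum.mono_neutral_right) (use assms finite_lp_vars in auto)

lemma is_basic_solution_exists:
  assumes bas: "is_basis nI nJ L B" and L: "L \<subseteq> {1..nI} \<times> {1..nJ}"
  shows "\<exists>v. is_basic_solution nI nJ L lam mu eps B v"
proof -
  from bas obtain N where N: "\<forall>r\<in>lp_rows nI nJ. \<forall>r'\<in>lp_rows nI nJ.
      (\<Sum>c\<in>B. lp_mat r c * N c r') = (if r = r' then 1 else 0)"
    unfolding is_basis_def by blast
  define v where
    "v c = (if c \<in> B then (\<Sum>r\<in>lp_rows nI nJ. N c r * lp_rhs lam mu eps r) else 0)" for c
  have "(\<Sum>c\<in>lp_vars nJ L. lp_mat r' c * v c) = lp_rhs lam mu eps r'"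
    if r': "r' \<in> lp_rows nI nJ" for r'
  proof -
    have "(\<Sum>c\<in>lp_vars nJ L. lp_mat r' c * v c)
        = (\<Sum>c\<in>B. lp_mat r' c * (\<Sum>r\<in>lp_rows nI nJ. N c r * lp_rhs lam mu eps r))"
      by (simp add: sum_lp_vars_supported[OF is_basis_subset_lp_vars[OF bas] L] v_def)
    also have "\<dots> = (\<Sum>r\<in>lp_rows nI nJ. (\<Sum>c\<in>B. lp_mat r' c * N c r) * lp_rhs lam mu eps r)"
      by (simp add: sum_distrib_left sum_distrib_right sum.swap[of _ B] mult.assoc)
    also have "\<dots> = (\<Sum>r\<in>lp_rows nI nJ. if r = r' then lp_rhs lam mu eps r else 0)"
      using N r' by (intro sum.cong) auto
    also have "\<dots> = lp_rhs lam mu eps r'"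
      using r' by (simp add: sum.delta' finite_lp_rows)
    finally show ?thesis .
  qed
  then have "is_basic_solution nI nJ L lam mu eps B v"
    unfolding is_basic_solution_def by (simp add: v_def)
  then show ?thesis by blast
qed

lemma is_basic_solution_unique:
  assumes bas: "is_basis nI nJ L B" and L: "L \<subseteq> {1..nI} \<times> {1..nJ}"
    and v: "is_basic_solution nI nJ L lam mu eps B v"
    and w: "is_basic_solution nI nJ L lam mu eps B w"
  shows "v = w"
proof
  fix c
  have BV: "B \<subseteq> lp_vars nJ L" using bas by (rule is_basis_subset_lp_vars)
  show "v c = w c"
  proof (cases "c \<in> B")
    case False
    then show ?thesis using v w by (simp add: is_basic_solution_def)
  next
    case True
    have "v c - w c = 0"
    proof (rule is_basis_columns_independent[OF bas L _ True, of "\<lambda>c. v c - w c"], intro ballI)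
      fix r assume r: "r \<in> lp_rows nI nJ"
      have "(\<Sum>c\<in>B. lp_mat r c * (v c - w c))
          = (\<Sum>c\<in>lp_vars nJ L. lp_mat r c * v c) - (\<Sum>c\<in>lp_vars nJ L. lp_mat r c * w c)"
        using sum_lp_vars_supported[OF BV L, of v] sum_lp_vars_supported[OF BV L, of w] v w
        by (simp add: is_basic_solution_def right_diff_distrib sum_subtractf)
      also have "\<dots> = 0" using v w r by (simp add: is_basic_solution_def)
      finally show "(\<Sum>c\<in>B. lp_mat r c * (v c - w c)) = 0" .
    qed
    then show ?thesis by simp
  qed
qed

lemma basic_solution_is_basic_solution:
  assumes "is_basis nI nJ L B" "L \<subseteq> {1..nI} \<times> {1..nJ}"
  shows "is_basic_solution nI nJ L lam mu eps B (basic_solution nI nJ L lam mu eps B)"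
proof -
  obtain v where v: "is_basic_solution nI nJ L lam mu eps B v"
    using is_basic_solution_exists[OF assms] by blast
  have "basic_solution nI nJ L lam mu eps B = v"
    unfolding basic_solution_def
    using v is_basic_solution_unique[OF assms _ v] by (rule the_equality)
  with v show ?thesis by simp
qed

section \<open>Signed cuts\<close>

definition cut_weight :: "row set \<Rightarrow> row \<Rightarrow> real" where
  "cut_weight T r = (if r \<in> T then (case r of Inl _ \<Rightarrow> -1 | Inr _ \<Rightarrow> 1) else 0)"

lemma sum_basic_solution_cut:
  assumes sol: "is_basic_solution nI nJ L lam mu eps B v"
    and BV: "B \<subseteq> lp_vars nJ L" and L: "L \<subseteq> {1..nI} \<times> {1..nJ}"
    and T: "T \<subseteq> lp_rows nI nJ"
  shows "(\<Sum>c\<in>B. v c * lp_row_comb (cut_weight T) c)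
    = sum mu (S_of T) - eps * card (S_of T) - sum lam (C_of T)"
proof -
  have supp: "\<forall>x. x \<notin> B \<longrightarrow> v x = 0"
    and eq: "\<forall>r\<in>lp_rows nI nJ. (\<Sum>c\<in>lp_vars nJ L. lp_mat r c * v c) = lp_rhs lam mu eps r"
    using sol unfolding is_basic_solution_def by auto
  have "(\<Sum>c\<in>B. v c * lp_row_comb (cut_weight T) c)
      = (\<Sum>c\<in>B. v c * (\<Sum>r\<in>lp_rows nI nJ. cut_weight T r * lp_mat r c))"
    using BV by (intro sum.cong) (auto simp: sum_rows_lp_mat[OF _ L])
  also have "\<dots> = (\<Sum>r\<in>lp_rows nI nJ. cut_weight T r * (\<Sum>c\<in>B. lp_mat r c * v c))"
    by (simp add: sum_distrib_left sum.swap[of _ B] ac_simps)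
  also have "\<dots> = (\<Sum>r\<in>lp_rows nI nJ. cut_weight T r * lp_rhs lam mu eps r)"
    using eq sum_lp_vars_supported[OF BV L supp] by (intro sum.cong) auto
  also have "\<dots> = (\<Sum>i\<in>{1..nI}. cut_weight T (Inl i) * lam i)
      + (\<Sum>j\<in>{1..nJ}. cut_weight T (Inr j) * (mu j - eps))"
    unfolding lp_rows_def by (subst sum.union_disjoint) (auto simp: sum.reindex)
  also have "(\<Sum>i\<in>{1..nI}. cut_weight T (Inl i) * lam i) = (\<Sum>i\<in>C_of T. - lam i)"
    using C_of_subset[OF T]
    by (intro sum.mono_neutral_cong_right) (auto simp: cut_weight_def C_of_def)
  also have "(\<Sum>j\<in>{1..nJ}. cut_weight T (Inr j) * (mu j - eps)) = (\<Sum>j\<in>S_of T. mu j - eps)"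
    using S_of_subset[OF T]
    by (intro sum.mono_neutral_cong_right) (auto simp: cut_weight_def S_of_def)
  finally show ?thesis by (simp add: sum_negf sum_subtractf)
qed

definition cut_isolates :: "var set \<Rightarrow> row set \<Rightarrow> var \<Rightarrow> bool" where
  "cut_isolates B T c \<longleftrightarrow> (\<forall>c'\<in>B - {c}. lp_row_comb (cut_weight T) c' = 0)"

lemma basic_solution_isolating_cut:
  assumes sol: "is_basic_solution nI nJ L lam mu eps B v"
    and bas: "is_basis nI nJ L B" and L: "L \<subseteq> {1..nI} \<times> {1..nJ}"
    and T: "T \<subseteq> lp_rows nI nJ" and c: "c \<in> B" and iso: "cut_isolates B T c"
  shows "v c * lp_row_comb (cut_weight T) c
    = sum mu (S_of T) - eps * card (S_of T) - sum lam (C_of T)"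
proof -
  have "(\<Sum>c'\<in>B. v c' * lp_row_comb (cut_weight T) c') = v c * lp_row_comb (cut_weight T) c"
    using iso c is_basis_finite[OF bas L]
    by (simp add: sum.remove cut_isolates_def sum.neutral)
  with sum_basic_solution_cut[OF sol is_basis_subset_lp_vars[OF bas] L T] show ?thesis
    by simp
qed

section \<open>Rooted subtrees of a symmetric relation\<close>

definition rooted_subtree :: "('a \<times> 'a) set \<Rightarrow> 'a set \<Rightarrow> 'a \<Rightarrow> 'a set" where
  "rooted_subtree E Rt v = {v} \<union> {w. w \<noteq> v \<and> (w, v) \<in> E\<^sup>* \<and>
     \<not> (\<exists>r\<in>Rt. r \<noteq> v \<and> (w, r) \<in> {(a, b) \<in> E. a \<noteq> v \<and> b \<noteq> v}\<^sup>*)}"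

lemma subtree_eq_rooted_subtree:
  "subtree B v = rooted_subtree (forest_edges B) (forest_roots B) v"
  unfolding subtree_def rooted_subtree_def ..

lemma rtrancl_sym_swap: "sym E \<Longrightarrow> (x, y) \<in> E\<^sup>* \<Longrightarrow> (y, x) \<in> E\<^sup>*"
  by (rule symD[OF sym_rtrancl])

lemma rtrancl_bridge_cases:
  assumes "E \<subseteq> E' \<union> {(p, q), (q, p)}" and "(x, y) \<in> E\<^sup>*"
  shows "(x, y) \<in> E'\<^sup>* \<or> (x, p) \<in> E'\<^sup>* \<or> (x, q) \<in> E'\<^sup>*"
  using assms(2)
proof (induction rule: rtrancl_induct)
  case base
  then show ?case by simp
next
  case (step y z)
  then show ?case using assms(1) by (auto intro: rtrancl_into_rtrancl)
qed

lemma rtrancl_avoiding: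
  assumes "(w, R) \<in> E'\<^sup>*" and "(q, R) \<notin> E'\<^sup>*" and "E' \<subseteq> E"
  shows "(w, R) \<in> {(a, b) \<in> E. a \<noteq> q \<and> b \<noteq> q}\<^sup>*"
  using assms(1)
proof (induction rule: converse_rtrancl_induct)
  case base
  then show ?case by simp
next
  case (step y z)
  then have "y \<noteq> q" "z \<noteq> q" using assms(2) by (auto intro: converse_rtrancl_into_rtrancl)
  with step assms(3) show ?case by (auto intro: converse_rtrancl_into_rtrancl)
qed

lemma rooted_subtree_below_bridge:
  assumes symE': "sym E'" and E'E: "E' \<subseteq> E" and E: "E \<subseteq> E' \<union> {(p, q), (q, p)}"
    and pq: "(p, q) \<in> E" and bridge: "(p, q) \<notin> E'\<^sup>*"
    and roots: "\<And>r r'. r \<in> Rt \<Longrightarrow> r' \<in> Rt \<Longrightarrow> (r, r') \<in> E\<^sup>* \<Longrightarrow> r = r'"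
    and R: "R \<in> Rt" "(p, R) \<in> E'\<^sup>*"
  shows "rooted_subtree E Rt q = E'\<^sup>* `` {q}" and "E'\<^sup>* `` {q} \<inter> Rt = {}"
proof -
  have sy: "(y, x) \<in> E'\<^sup>*" if "(x, y) \<in> E'\<^sup>*" for x y
    using rtrancl_sym_swap[OF symE' that] .
  have mono: "(x, y) \<in> E\<^sup>*" if "(x, y) \<in> E'\<^sup>*" for x y
    using rtrancl_mono[OF E'E] that by blast
  have qR: "(q, R) \<notin> E'\<^sup>*"
    using bridge R(2) sy by (meson rtrancl_trans)
  show no_root: "E'\<^sup>* `` {q} \<inter> Rt = {}"
  proof (rule ccontr)
    assume "E'\<^sup>* `` {q} \<inter> Rt \<noteq> {}"
    then obtain r where r: "r \<in> Rt" "(q, r) \<in> E'\<^sup>*" by auto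
    have "(R, p) \<in> E\<^sup>*" using mono[OF sy[OF R(2)]] .
    also have "(p, q) \<in> E\<^sup>*" using pq by simp
    also have "(q, r) \<in> E\<^sup>*" using mono[OF r(2)] .
    finally have "r = R" using roots r(1) R(1) by auto
    with r(2) qR show False by simp
  qed
  show "rooted_subtree E Rt q = E'\<^sup>* `` {q}"
  proof (intro equalityI subsetI)
    fix w assume w: "w \<in> rooted_subtree E Rt q"
    show "w \<in> E'\<^sup>* `` {q}"
    proof (cases "w = q")
      case False
      with w have wq: "(w, q) \<in> E\<^sup>*"
        and avoid: "\<not> (\<exists>r\<in>Rt. r \<noteq> q \<and> (w, r) \<in> {(a, b) \<in> E. a \<noteq> q \<and> b \<noteq> q}\<^sup>*)"
        unfolding rooted_subtree_def by auto
      have "(w, p) \<notin> E'\<^sup>*"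
      proof
        assume "(w, p) \<in> E'\<^sup>*"
        then have "(w, R) \<in> E'\<^sup>*" using R(2) by (rule rtrancl_trans)
        with avoid R(1) qR show False using rtrancl_avoiding[OF _ qR E'E] by auto
      qed
      with rtrancl_bridge_cases[OF E wq] show ?thesis using sy by auto
    qed simp
  next
    fix w assume w: "w \<in> E'\<^sup>* `` {q}"
    have "(w, r) \<notin> {(a, b) \<in> E. a \<noteq> q \<and> b \<noteq> q}\<^sup>*" if "r \<in> Rt" for r
    proof
      assume "(w, r) \<in> {(a, b) \<in> E. a \<noteq> q \<and> b \<noteq> q}\<^sup>*"
      moreover have "{(a, b) \<in> E. a \<noteq> q \<and> b \<noteq> q} \<subseteq> E'" using E by auto
      ultimately have "(w, r) \<in> E'\<^sup>*" using rtrancl_mono by blast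
      with w have "r \<in> E'\<^sup>* `` {q}" by (auto intro: rtrancl_trans)
      with no_root that show False by auto
    qed
    moreover have "(w, q) \<in> E\<^sup>*" using w sy mono by auto
    ultimately show "w \<in> rooted_subtree E Rt q" unfolding rooted_subtree_def by auto
  qed
qed

lemma rooted_subtree_of_root:
  assumes symE: "sym E"
    and roots: "\<And>r r'. r \<in> Rt \<Longrightarrow> r' \<in> Rt \<Longrightarrow> (r, r') \<in> E\<^sup>* \<Longrightarrow> r = r'"
    and R: "R \<in> Rt"
  shows "E `` rooted_subtree E Rt R \<subseteq> rooted_subtree E Rt R"
    and "rooted_subtree E Rt R \<inter> Rt = {R}"
proof -
  let ?E\<^sub>R = "{(a, b) \<in> E. a \<noteq> R \<and> b \<noteq> R}"
  show "E `` rooted_subtree E Rt R \<subseteq> rooted_subtree E Rt R"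
  proof (intro subsetI, elim ImageE)
    fix x y assume xy: "(x, y) \<in> E" and x: "x \<in> rooted_subtree E Rt R"
    have xR: "(x, R) \<in> E\<^sup>*" using x unfolding rooted_subtree_def by auto
    have yR: "(y, R) \<in> E\<^sup>*"
      using symD[OF symE xy] xR by (rule converse_rtrancl_into_rtrancl)
    have "(y, r) \<notin> ?E\<^sub>R\<^sup>*" if r: "r \<in> Rt" "r \<noteq> R" for r
    proof
      assume yr: "(y, r) \<in> ?E\<^sub>R\<^sup>*"
      show False
      proof (cases "x = R")
        case True
        have "(y, r) \<in> E\<^sup>*" using yr rtrancl_mono[of ?E\<^sub>R E] by blast
        with xy True have "(R, r) \<in> E\<^sup>*" by (auto intro: converse_rtrancl_into_rtrancl)
        with roots R r show False by auto
      next
        case False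
        have "y \<noteq> R" using yr r(2) by (auto elim: converse_rtranclE)
        with xy yr False have "(x, r) \<in> ?E\<^sub>R\<^sup>*" by (auto intro: converse_rtrancl_into_rtrancl)
        with x False r show False unfolding rooted_subtree_def by auto
      qed
    qed
    with yR show "y \<in> rooted_subtree E Rt R" unfolding rooted_subtree_def by auto
  qed
  show "rooted_subtree E Rt R \<inter> Rt = {R}"
    using R unfolding rooted_subtree_def by auto
qed

section \<open>The forest of a basis\<close>

lemma sym_forest_edges: "sym (forest_edges B)"
  unfolding forest_edges_def sym_def by auto

lemma forest_edges_mono: "B' \<subseteq> B \<Longrightarrow> forest_edges B' \<subseteq> forest_edges B"
  unfolding forest_edges_def by auto

lemma forest_edges_remove_link:
  "forest_edges B \<subseteq> forest_edges (B - {Inl (i, j)}) \<union> {(Inl i, Inr j), (Inr j, Inl i)}"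
  unfolding forest_edges_def by auto

lemma forest_edges_link:
  "Inl (i, j) \<in> B \<Longrightarrow> (Inl i, Inr j) \<in> forest_edges B \<and> (Inr j, Inl i) \<in> forest_edges B"
  unfolding forest_edges_def by auto

lemma self_in_subtree: "v \<in> subtree B v"
  by (simp add: subtree_def)

lemma subtree_subset_lp_rows:
  assumes "B \<subseteq> lp_vars nJ L" "L \<subseteq> {1..nI} \<times> {1..nJ}" "v \<in> lp_rows nI nJ"
  shows "subtree B v \<subseteq> lp_rows nI nJ"
proof
  fix w assume "w \<in> subtree B v"
  then consider "w = v" | "(w, v) \<in> (forest_edges B)\<^sup>+"
    unfolding subtree_def by (auto simp: rtrancl_eq_or_trancl)
  then show "w \<in> lp_rows nI nJ"
  proof cases
    case 2
    then obtain u where "(w, u) \<in> forest_edges B" by (auto elim: converse_tranclE)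
    with assms show ?thesis by (auto simp: forest_edges_def lp_vars_def lp_rows_def)
  qed (use assms in simp)
qed

lemma sum_lp_mat_add_unit:
  assumes "c\<^sub>0 \<in> B" "finite B"
  shows "(\<Sum>c\<in>B. lp_mat r c * (z c + s * (if c = c\<^sub>0 then 1 else 0)))
    = (\<Sum>c\<in>B. lp_mat r c * z c) + s * lp_mat r c\<^sub>0"
proof -
  have "(\<Sum>c\<in>B. lp_mat r c * (z c + s * (if c = c\<^sub>0 then 1 else 0)))
      = (\<Sum>c\<in>B. lp_mat r c * z c) + (\<Sum>c\<in>B. if c = c\<^sub>0 then s * lp_mat r c else 0)"
    unfolding sum.distrib[symmetric] by (rule sum.cong) (auto simp: algebra_simps)
  with assms show ?thesis by (simp add: sum.delta)
qed

text \<open>Walking along a path from x to y and adding the link columns with alternating signs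
  telescopes to the difference of the signed unit rows of x and y.\<close>

lemma forest_path_combination:
  assumes F: "F \<subseteq> B" and fin: "finite B" and xy: "(x, y) \<in> (forest_edges F)\<^sup>*"
  shows "\<exists>z. (\<forall>c. z c \<noteq> 0 \<longrightarrow> c \<in> F \<inter> range Inl) \<and>
    (\<forall>r. (\<Sum>c\<in>B. lp_mat r c * z c) = cut_weight {x} r - cut_weight {y} r)"
  using xy
proof (induction rule: rtrancl_induct)
  case base
  show ?case by (rule exI[of _ "\<lambda>_. 0"]) simp
next
  case (step y w)
  from step.IH obtain z where supp: "\<forall>c. z c \<noteq> 0 \<longrightarrow> c \<in> F \<inter> range Inl"
    and comb: "\<forall>r. (\<Sum>c\<in>B. lp_mat r c * z c) = cut_weight {x} r - cut_weight {y} r"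
    by blast
  from step.hyps(2) obtain i j where ij: "Inl (i, j) \<in> F"
    and yw: "(y = Inl i \<and> w = Inr j) \<or> (y = Inr j \<and> w = Inl i)"
    unfolding forest_edges_def by auto
  define s :: real where "s = (if y = Inl i then -1 else 1)"
  define z' where "z' c = z c + s * (if c = Inl (i, j) then 1 else 0)" for c
  have "(\<Sum>c\<in>B. lp_mat r c * z' c) = cut_weight {x} r - cut_weight {w} r" for r
  proof -
    have "(\<Sum>c\<in>B. lp_mat r c * z' c)
        = cut_weight {x} r - cut_weight {y} r + s * lp_mat r (Inl (i, j))"
      unfolding z'_def sum_lp_mat_add_unit[OF subsetD[OF F ij] fin] using comb by simp
    also have "\<dots> = cut_weight {x} r - cut_weight {w} r"
      using yw unfolding s_def cut_weight_def lp_mat_Inl by auto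
    finally show ?thesis .
  qed
  moreover have "\<forall>c. z' c \<noteq> 0 \<longrightarrow> c \<in> F \<inter> range Inl"
    using supp ij unfolding z'_def by auto
  ultimately show ?case by blast
qed

lemma basis_roots_disconnected:
  assumes bas: "is_basis nI nJ L B" and L: "L \<subseteq> {1..nI} \<times> {1..nJ}"
    and r: "r \<in> forest_roots B" "r' \<in> forest_roots B" and path: "(r, r') \<in> (forest_edges B)\<^sup>*"
  shows "r = r'"
proof (rule ccontr)
  assume ne: "r \<noteq> r'"
  obtain j j' where jj': "r = Inr j" "r' = Inr j'" "Inr j \<in> B" "Inr j' \<in> B"
    using r unfolding forest_roots_def by auto
  have fin: "finite B" using is_basis_finite[OF bas L] .
  obtain z where supp: "\<forall>c. z c \<noteq> 0 \<longrightarrow> c \<in> B \<inter> range Inl"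
    and comb: "\<forall>r''. (\<Sum>c\<in>B. lp_mat r'' c * z c) = cut_weight {r} r'' - cut_weight {r'} r''"
    using forest_path_combination[OF subset_refl fin path] by blast
  define z' where "z' c = (z c + (-1) * (if c = Inr j then 1 else 0))
    + 1 * (if c = Inr j' then 1 else 0)" for c
  have "z' (Inr j) = 0"
  proof (rule is_basis_columns_independent[OF bas L _ jj'(3)], intro ballI)
    fix r'' assume "r'' \<in> lp_rows nI nJ"
    have "(\<Sum>c\<in>B. lp_mat r'' c * z' c)
        = cut_weight {r} r'' - cut_weight {r'} r'' - lp_mat r'' (Inr j) + lp_mat r'' (Inr j')"
      unfolding z'_def sum_lp_mat_add_unit[OF jj'(4) fin] sum_lp_mat_add_unit[OF jj'(3) fin]
      using comb by simp
    also have "\<dots> = 0" unfolding jj'(1,2) cut_weight_def lp_mat_Inr by auto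
    finally show "(\<Sum>c\<in>B. lp_mat r'' c * z' c) = 0" .
  qed
  moreover have "z (Inr j) = 0" using supp by blast
  ultimately show False using ne jj' unfolding z'_def by auto
qed

lemma basis_link_is_bridge:
  assumes bas: "is_basis nI nJ L B" and L: "L \<subseteq> {1..nI} \<times> {1..nJ}"
    and c: "Inl (i, j) \<in> B"
  shows "(Inl i, Inr j) \<notin> (forest_edges (B - {Inl (i, j)}))\<^sup>*"
proof
  assume path: "(Inl i, Inr j) \<in> (forest_edges (B - {Inl (i, j)}))\<^sup>*"
  have fin: "finite B" using is_basis_finite[OF bas L] .
  obtain z where supp: "\<forall>c. z c \<noteq> 0 \<longrightarrow> c \<in> (B - {Inl (i, j)}) \<inter> range Inl"
    and comb: "\<forall>r. (\<Sum>c\<in>B. lp_mat r c * z c) = cut_weight {Inl i} r - cut_weight {Inr j} r"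
    using forest_path_combination[OF _ fin path] by blast
  define z' where "z' c = z c + 1 * (if c = Inl (i, j) then 1 else 0)" for c
  have "z' (Inl (i, j)) = 0"
  proof (rule is_basis_columns_independent[OF bas L _ c], intro ballI)
    fix r assume "r \<in> lp_rows nI nJ"
    have "(\<Sum>c\<in>B. lp_mat r c * z' c)
        = cut_weight {Inl i} r - cut_weight {Inr j} r + 1 * lp_mat r (Inl (i, j))"
      unfolding z'_def sum_lp_mat_add_unit[OF c fin] using comb by simp
    also have "\<dots> = 0" unfolding cut_weight_def lp_mat_Inl by auto
    finally show "(\<Sum>c\<in>B. lp_mat r c * z' c) = 0" .
  qed
  moreover have "z (Inl (i, j)) = 0" using supp by blast
  ultimately show False unfolding z'_def by simp
qed

text \<open>The signed indicator of a component without a root would be a nonzero vector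
  annihilating every basic column.\<close>

lemma basis_row_reaches_root:
  assumes bas: "is_basis nI nJ L B" and L: "L \<subseteq> {1..nI} \<times> {1..nJ}"
    and x: "x \<in> lp_rows nI nJ"
  shows "\<exists>R\<in>forest_roots B. (x, R) \<in> (forest_edges B)\<^sup>*"
proof (rule ccontr)
  assume no_root: "\<not> (\<exists>R\<in>forest_roots B. (x, R) \<in> (forest_edges B)\<^sup>*)"
  define K where "K = (forest_edges B)\<^sup>* `` {x}"
  have "cut_weight K x = 0"
  proof (rule is_basis_rows_independent[OF bas _ x], intro ballI)
    fix c assume c: "c \<in> B"
    have "lp_row_comb (cut_weight K) c = 0"
    proof (cases c)
      case (Inl p)
      then obtain i j where p: "c = Inl (i, j)" by (cases p) auto
      with c have "Inl i \<in> K \<longleftrightarrow> Inr j \<in> K"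
        unfolding K_def by (auto dest: forest_edges_link intro: rtrancl_into_rtrancl)
      then show ?thesis using p by (auto simp: lp_row_comb_def cut_weight_def)
    next
      case (Inr j)
      with c no_root have "Inr j \<notin> K" by (auto simp: K_def forest_roots_def)
      then show ?thesis using Inr by (simp add: lp_row_comb_def cut_weight_def)
    qed
    with c is_basis_subset_lp_vars[OF bas]
    show "(\<Sum>r\<in>lp_rows nI nJ. cut_weight K r * lp_mat r c) = 0"
      by (auto simp: sum_rows_lp_mat[OF _ L])
  qed
  moreover have "x \<in> K" by (simp add: K_def)
  ultimately show False by (cases x) (auto simp: cut_weight_def)
qed

lemma cut_isolates_if_closed:
  assumes closed: "forest_edges (B - {c}) `` T \<subseteq> T"
    and no_root: "forest_roots (B - {c}) \<inter> T = {}"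
  shows "cut_isolates B T c"
  unfolding cut_isolates_def
proof
  fix c' assume c': "c' \<in> B - {c}"
  show "lp_row_comb (cut_weight T) c' = 0"
  proof (cases c')
    case (Inl p)
    then obtain i j where p: "c' = Inl (i, j)" by (cases p) auto
    with c' closed have "Inl i \<in> T \<longleftrightarrow> Inr j \<in> T"
      using forest_edges_link[of i j "B - {c}"] by blast
    then show ?thesis using p by (auto simp: lp_row_comb_def cut_weight_def)
  next
    case (Inr j)
    with c' no_root have "Inr j \<notin> T" by (auto simp: forest_roots_def)
    then show ?thesis using Inr by (simp add: lp_row_comb_def cut_weight_def)
  qed
qed

lemma root_slack_isolated:
  assumes bas: "is_basis nI nJ L B" and L: "L \<subseteq> {1..nI} \<times> {1..nJ}" and j: "Inr j \<in> B"
  shows "cut_isolates B (subtree B (Inr j)) (Inr j)"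
proof (rule cut_isolates_if_closed)
  have "Inr j \<in> forest_roots B" using j by (simp add: forest_roots_def)
  note T = rooted_subtree_of_root[OF sym_forest_edges basis_roots_disconnected[OF bas L] this]
  show "forest_edges (B - {Inr j}) `` subtree B (Inr j) \<subseteq> subtree B (Inr j)"
    using T(1) forest_edges_mono[of "B - {Inr j}" B] unfolding subtree_eq_rooted_subtree by blast
  show "forest_roots (B - {Inr j}) \<inter> subtree B (Inr j) = {}"
    using T(2) unfolding subtree_eq_rooted_subtree by (auto simp: forest_roots_def)
qed

lemma link_isolated_below_bridge:
  assumes bas: "is_basis nI nJ L B" and L: "L \<subseteq> {1..nI} \<times> {1..nJ}"
    and c: "Inl (i, j) \<in> B"
    and pq: "(p, q) = (Inl i, Inr j) \<or> (p, q) = (Inr j, Inl i)"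
    and R: "R \<in> forest_roots B" "(p, R) \<in> (forest_edges (B - {Inl (i, j)}))\<^sup>*"
  shows "cut_isolates B (subtree B q) (Inl (i, j))" and "q \<in> subtree B q" and "p \<notin> subtree B q"
proof -
  let ?E' = "forest_edges (B - {Inl (i, j)})"
  have sym': "(y, x) \<in> ?E'\<^sup>*" if "(x, y) \<in> ?E'\<^sup>*" for x y
    using rtrancl_sym_swap[OF sym_forest_edges that] .
  have E: "forest_edges B \<subseteq> ?E' \<union> {(p, q), (q, p)}"
    using forest_edges_remove_link[of B i j] pq by auto
  have edge: "(p, q) \<in> forest_edges B" using forest_edges_link[OF c] pq by auto
  have bridge: "(p, q) \<notin> ?E'\<^sup>*" using basis_link_is_bridge[OF bas L c] pq sym' by auto
  note T = rooted_subtree_below_bridge[OF sym_forest_edges forest_edges_mono[OF Diff_subset]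
      E edge bridge basis_roots_disconnected[OF bas L] R]
  have T': "subtree B q = ?E'\<^sup>* `` {q}" using T(1) by (simp add: subtree_eq_rooted_subtree)
  show "cut_isolates B (subtree B q) (Inl (i, j))"
  proof (rule cut_isolates_if_closed)
    show "?E' `` subtree B q \<subseteq> subtree B q" unfolding T' by (auto intro: rtrancl_into_rtrancl)
    show "forest_roots (B - {Inl (i, j)}) \<inter> subtree B q = {}"
      using T(2) unfolding T' by (auto simp: forest_roots_def)
  qed
  show "q \<in> subtree B q" by (rule self_in_subtree)
  show "p \<notin> subtree B q" using bridge sym' unfolding T' by auto
qed

lemma basic_variable_isolating_subtree:
  assumes bas: "is_basis nI nJ L B" and L: "L \<subseteq> {1..nI} \<times> {1..nJ}" and c: "c \<in> B"
  shows "(\<exists>j\<in>{1..nJ}. cut_isolates B (subtree B (Inr j)) c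
            \<and> lp_row_comb (cut_weight (subtree B (Inr j))) c = 1)
       \<or> (\<exists>i\<in>{1..nI}. cut_isolates B (subtree B (Inl i)) c
            \<and> lp_row_comb (cut_weight (subtree B (Inl i))) c = -1)"
proof (cases c)
  case (Inr j)
  with c is_basis_subset_lp_vars[OF bas] have "j \<in> {1..nJ}" by (auto simp: lp_vars_def)
  moreover have "lp_row_comb (cut_weight (subtree B (Inr j))) c = 1"
    using Inr by (simp add: self_in_subtree lp_row_comb_def cut_weight_def)
  ultimately show ?thesis using root_slack_isolated[OF bas L] c Inr by blast
next
  case (Inl p)
  then obtain i j where c_ij: "c = Inl (i, j)" by (cases p) auto
  with c have c': "Inl (i, j) \<in> B" by simp
  with is_basis_subset_lp_vars[OF bas] L have ij: "i \<in> {1..nI}" "j \<in> {1..nJ}"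
    by (auto simp: lp_vars_def)
  let ?E' = "forest_edges (B - {Inl (i, j)})"
  obtain R where R: "R \<in> forest_roots B" "(Inl i, R) \<in> (forest_edges B)\<^sup>*"
    using basis_row_reaches_root[OF bas L, of "Inl i"] ij by (auto simp: lp_rows_def)
  have "(R, Inl i) \<in> ?E'\<^sup>* \<or> (R, Inr j) \<in> ?E'\<^sup>*"
    using rtrancl_bridge_cases[OF forest_edges_remove_link
        rtrancl_sym_swap[OF sym_forest_edges R(2)]] by auto
  then show ?thesis
  proof
    assume "(R, Inl i) \<in> ?E'\<^sup>*"
    then have "(Inl i, R) \<in> ?E'\<^sup>*" by (rule rtrancl_sym_swap[OF sym_forest_edges])
    note below_j = link_isolated_below_bridge[where p = "Inl i" and q = "Inr j",
        OF bas L c' _ R(1) this]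
    have "lp_row_comb (cut_weight (subtree B (Inr j))) c = 1"
      using below_j(2,3) c_ij by (simp add: lp_row_comb_def cut_weight_def)
    with below_j(1) c_ij ij show ?thesis by auto
  next
    assume "(R, Inr j) \<in> ?E'\<^sup>*"
    then have "(Inr j, R) \<in> ?E'\<^sup>*" by (rule rtrancl_sym_swap[OF sym_forest_edges])
    note below_i = link_isolated_below_bridge[where p = "Inr j" and q = "Inl i",
        OF bas L c' _ R(1) this]
    have "lp_row_comb (cut_weight (subtree B (Inl i))) c = -1"
      using below_i(2,3) c_ij by (simp add: lp_row_comb_def cut_weight_def)
    with below_i(1) c_ij ij show ?thesis by auto
  qed
qed

lemma subtree_margin:
  fixes lam mu :: "nat \<Rightarrow> real"
  assumes BV: "B \<subseteq> lp_vars nJ L" and L: "L \<subseteq> {1..nI} \<times> {1..nJ}"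
    and eps: "eps < (MIN j\<in>{1..nJ}.
                (sum mu (S_of (subtree B (Inr j))) - sum lam (C_of (subtree B (Inr j))))
                / real (card (S_of (subtree B (Inr j)))))"
    and j: "j \<in> {1..nJ}"
  shows "eps * card (S_of (subtree B (Inr j)))
    < sum mu (S_of (subtree B (Inr j))) - sum lam (C_of (subtree B (Inr j)))"
proof -
  have "subtree B (Inr j) \<subseteq> lp_rows nI nJ"
    using subtree_subset_lp_rows[OF BV L] j by (simp add: lp_rows_def)
  then have "finite (S_of (subtree B (Inr j)))"
    using finite_subset[OF S_of_subset finite_atLeastAtMost] by blast
  moreover have "j \<in> S_of (subtree B (Inr j))" by (simp add: S_of_def self_in_subtree)
  ultimately have "card (S_of (subtree B (Inr j))) > 0" by (auto simp: card_gt_0_iff)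
  moreover have "eps < (sum mu (S_of (subtree B (Inr j))) - sum lam (C_of (subtree B (Inr j))))
                / real (card (S_of (subtree B (Inr j))))"
    using j by (intro order.strict_trans2[OF eps] Min_le) auto
  ultimately show ?thesis by (simp add: pos_less_divide_eq)
qed

theorem lemma3:
  fixes nI nJ :: nat and L :: "(nat \<times> nat) set"
    and lam mu :: "nat \<Rightarrow> real" and theta :: "nat \<times> nat \<Rightarrow> real"
    and B :: "var set" and eps :: real
  assumes L: "L \<subseteq> {1..nI} \<times> {1..nJ}"
    and lam: "\<forall>i\<in>{1..nI}. lam i > 0"
    and mu: "\<forall>j\<in>{1..nJ}. mu j > 0"
    and theta: "\<forall>l\<in>L. theta l \<ge> 0"
    and B: "nondeg_feasible_basis nI nJ L lam mu theta 0 B"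
    and eps0: "0 \<le> eps"
    and eps: "eps < (MIN j\<in>{1..nJ}.
                (sum mu (S_of (subtree B (Inr j))) - sum lam (C_of (subtree B (Inr j))))
                / real (card (S_of (subtree B (Inr j)))))"
  shows "nondeg_feasible_basis nI nJ L lam mu theta eps B"
proof -
  have bas: "is_basis nI nJ L B" using B by (simp add: nondeg_feasible_basis_def)
  have cut: "basic_solution nI nJ L lam mu e B c * lp_row_comb (cut_weight (subtree B v)) c
      = sum mu (S_of (subtree B v)) - e * card (S_of (subtree B v)) - sum lam (C_of (subtree B v))"
    if "v \<in> lp_rows nI nJ" "c \<in> B" "cut_isolates B (subtree B v) c" for v c e
    using basic_solution_isolating_cut[OF basic_solution_is_basic_solution[OF bas L] bas L
        subtree_subset_lp_rows[OF is_basis_subset_lp_vars[OF bas] L that(1)] that(2,3)] .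
  have "basic_solution nI nJ L lam mu eps B c > 0" if c: "c \<in> B" for c
    using basic_variable_isolating_subtree[OF bas L c]
  proof (elim disjE bexE conjE)
    fix j assume j: "j \<in> {1..nJ}" and "cut_isolates B (subtree B (Inr j)) c"
      and "lp_row_comb (cut_weight (subtree B (Inr j))) c = 1"
    moreover have "Inr j \<in> lp_rows nI nJ" using j by (simp add: lp_rows_def)
    ultimately show ?thesis
      using cut[of "Inr j" c eps] subtree_margin[OF is_basis_subset_lp_vars[OF bas] L eps j] c
      by simp
  next
    fix i assume i: "i \<in> {1..nI}" and "cut_isolates B (subtree B (Inl i)) c"
      and "lp_row_comb (cut_weight (subtree B (Inl i))) c = -1"
    moreover have "Inl i \<in> lp_rows nI nJ" using i by (simp add: lp_rows_def)
    moreover have "basic_solution nI nJ L lam mu 0 B c > 0"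
      using B c by (auto simp: nondeg_feasible_basis_def order.order_iff_strict)
    moreover have "eps * card (S_of (subtree B (Inl i))) \<ge> 0" using eps0 by simp
    ultimately show ?thesis using cut[of "Inl i" c 0] cut[of "Inl i" c eps] c by fastforce
  qed
  with bas show ?thesis by (force simp: nondeg_feasible_basis_def)
qed

end
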